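(* Let $\mathcal{D} \in \mathsf{PLL}_2^\infty$ be finitely expandable. If $\mathcal{D}$ is weakly progressing then any infinite branch contains the main branch of a non-wellfounded box. Moreover, $\mathcal{D}$ is progressing if and only if $\mathcal{D}$ is weakly progressing.
   Context: Formulas: $A ::= X \mid X^\perp \mid A\otimes A \mid A ⅋ A \mid {!A} \mid {?A} \mid \mathbf{1} \mid \bot \mid \forall X.A \mid \exists X.A$. $\mathsf{PLL}_2^\infty$ is the set of possibly infinite coderivations over axiom, cut, $\otimes$, $⅋$, $\mathbf{1}$, $\bot$, weakening $?\mathsf{w}$ (from $\Gamma$ infer $\Gamma,?A$), absorption $?\mathsf{b}$ (from $\Gamma,A,?A$ infer $\Gamma,?A$), $\forall$, $\exists$ (instantiating only $(!,?)$-free formulas), and conditional promotion $\mathsf{cp}$ (from left premise $\Gamma,A$ and right premise $?\Gamma,!A$ infer $?\Gamma,!A$). A coderivation is finitely expandable if every branch contains finitely many cut and $?\mathsf{b}$ rules; weakly progressing if every infinite branch contains infinitely many right premises of $\mathsf{cp}$ rules; progressing if every infinite branch contains a $!$-thread (maximal upward sequence of $!$-formula occurrences linked by the parent relation) which is infinitely often in the conclusion of a $\mathsf{cp}$ rule. A non-wellfounded box is a coderivation whose infinite rightmost branch $\{\epsilon,2,22,\dots\}$ (its main branch) consists of conclusions of $\mathsf{cp}$ rules. *)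

theory Defs
  imports Main
begin

section \<open>Formulas of second-order linear logic (de Bruijn indices for variables)\<close>

datatype fm =
    Var nat
  | NVar nat
  | Tens fm fm
  | Par fm fm
  | Bang fm
  | Why fm
  | One
  | Bot
  | All fm           (* forall X. A, X bound = index 0 *)
  | Ex fm

fun dual :: "fm \<Rightarrow> fm" where
  "dual (Var n) = NVar n"
| "dual (NVar n) = Var n"
| "dual (Tens A B) = Par (dual A) (dual B)"
| "dual (Par A B) = Tens (dual A) (dual B)"
| "dual (Bang A) = Why (dual A)"
| "dual (Why A) = Bang (dual A)"
| "dual One = Bot"
| "dual Bot = One"
| "dual (All A) = Ex (dual A)"
| "dual (Ex A) = All (dual A)"

fun lift :: "nat \<Rightarrow> fm \<Rightarrow> fm" where
  "lift c (Var n) = Var (if n < c then n else Suc n)"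
| "lift c (NVar n) = NVar (if n < c then n else Suc n)"
| "lift c (Tens A B) = Tens (lift c A) (lift c B)"
| "lift c (Par A B) = Par (lift c A) (lift c B)"
| "lift c (Bang A) = Bang (lift c A)"
| "lift c (Why A) = Why (lift c A)"
| "lift c One = One"
| "lift c Bot = Bot"
| "lift c (All A) = All (lift (Suc c) A)"
| "lift c (Ex A) = Ex (lift (Suc c) A)"

fun subst :: "nat \<Rightarrow> fm \<Rightarrow> fm \<Rightarrow> fm" where
  "subst k B (Var n) = (if n = k then B else if k < n then Var (n - 1) else Var n)"
| "subst k B (NVar n) = (if n = k then dual B else if k < n then NVar (n - 1) else NVar n)"
| "subst k B (Tens A C) = Tens (subst k B A) (subst k B C)"
| "subst k B (Par A C) = Par (subst k B A) (subst k B C)"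
| "subst k B (Bang A) = Bang (subst k B A)"
| "subst k B (Why A) = Why (subst k B A)"
| "subst k B One = One"
| "subst k B Bot = Bot"
| "subst k B (All A) = All (subst (Suc k) (lift 0 B) A)"
| "subst k B (Ex A) = Ex (subst (Suc k) (lift 0 B) A)"

fun exp_free :: "fm \<Rightarrow> bool" where
  "exp_free (Tens A B) = (exp_free A \<and> exp_free B)"
| "exp_free (Par A B) = (exp_free A \<and> exp_free B)"
| "exp_free (Bang A) = False"
| "exp_free (Why A) = False"
| "exp_free (All A) = exp_free A"
| "exp_free (Ex A) = exp_free A"
| "exp_free _ = True"

fun is_bang :: "fm \<Rightarrow> bool" where
  "is_bang (Bang A) = True"
| "is_bang _ = False"

fun is_why :: "fm \<Rightarrow> bool" where
  "is_why (Why A) = True"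
| "is_why _ = False"

fun unwhy :: "fm \<Rightarrow> fm" where
  "unwhy (Why A) = A"
| "unwhy A = A"

definition del :: "nat \<Rightarrow> 'a list \<Rightarrow> 'a list" where
  "del i xs = take i xs @ drop (Suc i) xs"

definition ctxmap :: "nat \<Rightarrow> nat \<Rightarrow> nat" where
  "ctxmap i j = (if j < i then j else Suc j)"

definition sel_idxs :: "bool list \<Rightarrow> nat list" where
  "sel_idxs bs = filter (\<lambda>k. bs ! k) [0..<length bs]"

definition sel :: "bool list \<Rightarrow> 'a list \<Rightarrow> 'a list" where
  "sel bs xs = map (\<lambda>k. xs ! k) (sel_idxs bs)"

text \<open>The integer i is the position of the principal formula in the conclusion;
  bool lists bs describe how the context is split between the two premises.\<close>
datatype rule =
    RAx
  | RCut "bool list" fm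
  | RTensor nat "bool list"
  | RPar nat
  | ROne
  | RBot nat
  | RWeak nat
  | RAbs nat
  | RAll nat
  | REx nat fm
  | RCp nat

fun arity :: "rule \<Rightarrow> nat" where
  "arity RAx = 0"
| "arity ROne = 0"
| "arity (RCut bs C) = 2"
| "arity (RTensor i bs) = 2"
| "arity (RCp i) = 2"
| "arity _ = 1"

fun is_cp :: "rule \<Rightarrow> bool" where
  "is_cp (RCp i) = True"
| "is_cp _ = False"

fun is_cut_or_abs :: "rule \<Rightarrow> bool" where
  "is_cut_or_abs (RCut bs C) = True"
| "is_cut_or_abs (RAbs i) = True"
| "is_cut_or_abs _ = False"

fun valid_step :: "rule \<Rightarrow> fm list \<Rightarrow> fm list list \<Rightarrow> bool" where
  "valid_step RAx G Ps = ((\<exists>A. G = [A, dual A]) \<and> Ps = [])"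
| "valid_step (RCut bs C) G Ps =
     (length bs = length G \<and> Ps = [sel bs G @ [C], sel (map Not bs) G @ [dual C]])"
| "valid_step (RTensor i bs) G Ps =
     (i < length G \<and> length bs = length G - 1 \<and>
      (\<exists>A B. G ! i = Tens A B \<and>
         Ps = [sel bs (del i G) @ [A], sel (map Not bs) (del i G) @ [B]]))"
| "valid_step (RPar i) G Ps =
     (i < length G \<and> (\<exists>A B. G ! i = Par A B \<and> Ps = [del i G @ [A, B]]))"
| "valid_step ROne G Ps = (G = [One] \<and> Ps = [])"
| "valid_step (RBot i) G Ps = (i < length G \<and> G ! i = Bot \<and> Ps = [del i G])"
| "valid_step (RWeak i) G Ps =
     (i < length G \<and> (\<exists>A. G ! i = Why A) \<and> Ps = [del i G])"
| "valid_step (RAbs i) G Ps =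
     (i < length G \<and> (\<exists>A. G ! i = Why A \<and> Ps = [del i G @ [A, Why A]]))"
| "valid_step (RAll i) G Ps =
     (i < length G \<and> (\<exists>A. G ! i = All A \<and> Ps = [map (lift 0) (del i G) @ [A]]))"
| "valid_step (REx i B) G Ps =
     (i < length G \<and> exp_free B \<and>
      (\<exists>A. G ! i = Ex A \<and> Ps = [del i G @ [subst 0 B A]]))"
| "valid_step (RCp i) G Ps =
     (i < length G \<and> (\<forall>C\<in>set (del i G). is_why C) \<and>
      (\<exists>A. G ! i = Bang A \<and> Ps = [map unwhy (del i G) @ [A], G]))"

text \<open>Parent relation: parent r n k j = Some m means that the occurrence at position j
  of premise k (1 = left/only, 2 = right) of rule r with a conclusion of length n
  has as parent the occurrence at position m of the conclusion.\<close>
fun parent :: "rule \<Rightarrow> nat \<Rightarrow> nat \<Rightarrow> nat \<Rightarrow> nat option" where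
  "parent RAx n k j = None"
| "parent ROne n k j = None"
| "parent (RCut bs C) n k j =
     (let bs' = (if k = 1 then bs else map Not bs); L = length (sel_idxs bs') in
      if k \<in> {1, 2} \<and> j < L then Some (sel_idxs bs' ! j) else None)"
| "parent (RTensor i bs) n k j =
     (let bs' = (if k = 1 then bs else map Not bs); L = length (sel_idxs bs') in
      if k \<in> {1, 2} \<and> j < L then Some (ctxmap i (sel_idxs bs' ! j))
      else if k \<in> {1, 2} \<and> j = L then Some i else None)"
| "parent (RPar i) n k j =
     (if k = 1 \<and> j < n - 1 then Some (ctxmap i j)
      else if k = 1 \<and> j \<in> {n - 1, n} then Some i else None)"
| "parent (RBot i) n k j = (if k = 1 \<and> j < n - 1 then Some (ctxmap i j) else None)"
| "parent (RWeak i) n k j = (if k = 1 \<and> j < n - 1 then Some (ctxmap i j) else None)"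
| "parent (RAbs i) n k j =
     (if k = 1 \<and> j < n - 1 then Some (ctxmap i j)
      else if k = 1 \<and> j \<in> {n - 1, n} then Some i else None)"
| "parent (RAll i) n k j =
     (if k = 1 \<and> j < n - 1 then Some (ctxmap i j)
      else if k = 1 \<and> j = n - 1 then Some i else None)"
| "parent (REx i B) n k j =
     (if k = 1 \<and> j < n - 1 then Some (ctxmap i j)
      else if k = 1 \<and> j = n - 1 then Some i else None)"
| "parent (RCp i) n k j =
     (if k = 1 \<and> j < n - 1 then Some (ctxmap i j)
      else if k = 1 \<and> j = n - 1 then Some i
      else if k = 2 \<and> j < n then Some j else None)"

text \<open>A (possibly infinite) coderivation is a labelling of addresses (words over {1,2})
  by a sequent and a rule; the children of w are w@[1] and w@[2]
  (w@[2] being the right premise of a binary rule).\<close>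
type_synonym coder = "nat list \<Rightarrow> fm list \<times> rule"

definition seqt :: "coder \<Rightarrow> nat list \<Rightarrow> fm list" where
  "seqt D w = fst (D w)"

definition rl :: "coder \<Rightarrow> nat list \<Rightarrow> rule" where
  "rl D w = snd (D w)"

inductive_set pos :: "coder \<Rightarrow> nat list set" for D where
  root: "[] \<in> pos D"
| child: "w \<in> pos D \<Longrightarrow> 1 \<le> k \<Longrightarrow> k \<le> arity (rl D w) \<Longrightarrow> w @ [k] \<in> pos D"

definition coderivation :: "coder \<Rightarrow> bool" where
  "coderivation D \<longleftrightarrow>
     (\<forall>w\<in>pos D. valid_step (rl D w) (seqt D w)
                   (map (\<lambda>k. seqt D (w @ [k])) [1..<Suc (arity (rl D w))]))"

definition inf_branch :: "coder \<Rightarrow> (nat \<Rightarrow> nat list) \<Rightarrow> bool" where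
  "inf_branch D b \<longleftrightarrow> b 0 = [] \<and>
     (\<forall>n. \<exists>k. 1 \<le> k \<and> k \<le> arity (rl D (b n)) \<and> b (Suc n) = b n @ [k])"

definition finitely_expandable :: "coder \<Rightarrow> bool" where
  "finitely_expandable D \<longleftrightarrow>
     (\<forall>b. inf_branch D b \<longrightarrow> finite {n. is_cut_or_abs (rl D (b n))})"

definition weakly_progressing :: "coder \<Rightarrow> bool" where
  "weakly_progressing D \<longleftrightarrow>
     (\<forall>b. inf_branch D b \<longrightarrow>
        infinite {n. is_cp (rl D (b n)) \<and> b (Suc n) = b n @ [2]})"

text \<open>A !-thread along the branch b: starting at step n0, occurrence positions j n,
  all !-formulas, each the parent of the next; maximal (cannot be extended downwards).\<close>
definition bang_thread :: "coder \<Rightarrow> (nat \<Rightarrow> nat list) \<Rightarrow> nat \<Rightarrow> (nat \<Rightarrow> nat) \<Rightarrow> bool" where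
  "bang_thread D b n0 j \<longleftrightarrow>
     (\<forall>n\<ge>n0. j n < length (seqt D (b n)) \<and> is_bang (seqt D (b n) ! j n) \<and>
        parent (rl D (b n)) (length (seqt D (b n))) (last (b (Suc n))) (j (Suc n)) = Some (j n))
     \<and> (n0 = 0 \<or>
        (\<forall>m. parent (rl D (b (n0 - 1))) (length (seqt D (b (n0 - 1)))) (last (b n0)) (j n0) = Some m
             \<longrightarrow> \<not> (m < length (seqt D (b (n0 - 1))) \<and> is_bang (seqt D (b (n0 - 1)) ! m))))"

definition progressing :: "coder \<Rightarrow> bool" where
  "progressing D \<longleftrightarrow>
     (\<forall>b. inf_branch D b \<longrightarrow>
        (\<exists>n0 j. bang_thread D b n0 j \<and> infinite {n. n0 \<le> n \<and> is_cp (rl D (b n))}))"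

text \<open>The sub-coderivation rooted at v is a non-wellfounded box: its main branch
  v, v2, v22, ... consists of conclusions of cp rules.\<close>
definition nwf_box_at :: "coder \<Rightarrow> nat list \<Rightarrow> bool" where
  "nwf_box_at D v \<longleftrightarrow> (\<forall>m. is_cp (rl D (v @ replicate m 2)))"

end

theory Submission
  imports Defs "HOL-Library.Infinite_Set"
begin

text \<open>Count the modalities ! and ? of a sequent. Below the last cut and absorption of an
  infinite branch (there are finitely many, by finite expandability) no rule increases this
  count, while weakening and the passage to the left premise of cp decrease it; so eventually
  neither occurs. The right premise of cp repeats its conclusion ?\<Gamma>,!A, and on a sequent of ?- and
  !-formulas only weakening and cp apply. Hence, from the first cp passed on the right after that
  point, the branch follows right premises of cp forever: it is the main branch of a
  non-wellfounded box, and !A is a !-thread through infinitely many cp conclusions. Conversely,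
  the size of the formulas of a !-thread never increases and strictly decreases whenever the
  thread enters a left premise of cp, so a thread through infinitely many cp rules eventually
  passes them on the right.\<close>

section \<open>Modalities and formula sizes across rule instances\<close>

fun modalities :: "fm \<Rightarrow> nat" where
  "modalities (Tens A B) = modalities A + modalities B"
| "modalities (Par A B) = modalities A + modalities B"
| "modalities (Bang A) = Suc (modalities A)"
| "modalities (Why A) = Suc (modalities A)"
| "modalities (All A) = modalities A"
| "modalities (Ex A) = modalities A"
| "modalities _ = 0"

lemma modalities_lift [simp]: "modalities (lift c A) = modalities A"
  by (induct A arbitrary: c) auto

lemma exp_free_dual: "exp_free B \<Longrightarrow> exp_free (dual B)"
  by (induct B) auto

lemma exp_free_lift: "exp_free B \<Longrightarrow> exp_free (lift c B)"
  by (induct B arbitrary: c) auto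

lemma exp_free_modalities: "exp_free B \<Longrightarrow> modalities B = 0"
  by (induct B) auto

lemma modalities_subst: "exp_free B \<Longrightarrow> modalities (subst k B A) = modalities A"
  by (induct A arbitrary: k B) (auto simp: exp_free_modalities exp_free_dual exp_free_lift)

definition seq_modalities :: "fm list \<Rightarrow> nat" where
  "seq_modalities G = sum_list (map modalities G)"

lemma seq_modalities_simps [simp]:
  "seq_modalities [] = 0"
  "seq_modalities (A # G) = modalities A + seq_modalities G"
  "seq_modalities (G @ H) = seq_modalities G + seq_modalities H"
  "seq_modalities (map (lift c) G) = seq_modalities G"
  by (simp_all add: seq_modalities_def comp_def)

lemma length_del [simp]: "i < length G \<Longrightarrow> length (del i G) = length G - 1"
  by (auto simp: del_def)

lemma nth_del: "i < length G \<Longrightarrow> k < length G - 1 \<Longrightarrow> del i G ! k = G ! ctxmap i k"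
  by (auto simp: del_def ctxmap_def nth_append min_def)

lemma del_decomp: "i < length G \<Longrightarrow> G = take i G @ G ! i # drop (Suc i) G"
  by (simp add: id_take_nth_drop)

lemma set_subset_insert_del: "i < length G \<Longrightarrow> set G \<subseteq> insert (G ! i) (set (del i G))"
  by (subst del_decomp) (auto simp: del_def)

lemma seq_modalities_del:
  "i < length G \<Longrightarrow> seq_modalities G = seq_modalities (del i G) + modalities (G ! i)"
  by (subst del_decomp) (auto simp: del_def)

lemma seq_modalities_unwhy:
  "\<forall>A\<in>set G. is_why A \<Longrightarrow> seq_modalities (map unwhy G) + length G = seq_modalities G"
proof (induct G)
  case (Cons A G)
  then show ?case by (cases A) auto
qed simp

lemma length_sel [simp]: "length (sel bs xs) = length (sel_idxs bs)"
  by (simp add: sel_def)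

lemma nth_sel: "j < length (sel_idxs bs) \<Longrightarrow> sel bs xs ! j = xs ! (sel_idxs bs ! j)"
  by (simp add: sel_def)

lemma nth_sel_idxs_less: "j < length (sel_idxs bs) \<Longrightarrow> length bs = n \<Longrightarrow> sel_idxs bs ! j < n"
  using nth_mem[of j "sel_idxs bs"] by (auto simp: sel_idxs_def)

lemma seq_modalities_sel_le: "length bs = length G \<Longrightarrow> seq_modalities (sel bs G) \<le> seq_modalities G"
proof -
  assume "length bs = length G"
  then have "sel bs G = map (nth G) (filter (nth bs) [0..<length G])"
    by (simp add: sel_def sel_idxs_def)
  also have "seq_modalities \<dots> \<le> sum_list (map (modalities \<circ> nth G) [0..<length G])"
    unfolding seq_modalities_def map_map by (rule sum_list_filter_le_nat)
  also have "\<dots> = seq_modalities G"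
    by (simp add: seq_modalities_def map_nth flip: map_map)
  finally show ?thesis .
qed

lemma premise_seq_modalities_le:
  assumes "valid_step r G Ps" and "\<not> is_cut_or_abs r" and "P \<in> set Ps"
  shows "seq_modalities P \<le> seq_modalities G"
proof (cases r)
  case (RTensor i bs)
  with assms show ?thesis
    using seq_modalities_del[of i G] seq_modalities_sel_le[of bs "del i G"]
      seq_modalities_sel_le[of "map Not bs" "del i G"] by auto
next
  case (RCp i)
  with assms show ?thesis
    using seq_modalities_del[of i G] seq_modalities_unwhy[of "del i G"] by auto
qed (use assms in \<open>auto simp: seq_modalities_del modalities_subst\<close>)

lemma weakening_premise_seq_modalities_less:
  "valid_step (RWeak i) G Ps \<Longrightarrow> P \<in> set Ps \<Longrightarrow> seq_modalities P < seq_modalities G"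
  by (auto simp: seq_modalities_del)

lemma cp_left_premise_seq_modalities_less:
  assumes "valid_step (RCp i) G Ps"
  shows "seq_modalities (Ps ! 0) < seq_modalities G"
  using assms seq_modalities_del[of i G] seq_modalities_unwhy[of "del i G"] by auto

lemma size_unwhy_le: "size (unwhy A) \<le> size A"
  by (cases A) auto

lemma size_lift [simp]: "size (lift c A) = size A"
  by (induct A arbitrary: c) auto

text \<open>The hypothesis that the parent is a !-formula is needed for the \<exists>-rule, whose
  instantiation can make the premise formula larger than its parent.\<close>
lemma parent_size_le:
  assumes "valid_step r G Ps" and "1 \<le> k" and "k \<le> arity r"
    and "j < length (Ps ! (k - 1))" and "parent r (length G) k j = Some m"
    and "is_bang (G ! m)"
  shows "size (Ps ! (k - 1) ! j) \<le> size (G ! m)"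
  using assms
  by (cases r)
    (auto simp: nth_append nth_sel nth_del nth_sel_idxs_less Let_def size_unwhy_le split: if_splits)

lemma cp_left_parent_size_less:
  assumes "valid_step (RCp i) G Ps" and "j < length (Ps ! 0)"
    and "parent (RCp i) (length G) 1 j = Some m"
  shows "size (Ps ! 0 ! j) < size (G ! m)"
proof (cases "j < length G - 1")
  case True
  with assms have "is_why (G ! m)" and "Ps ! 0 ! j = unwhy (G ! m)"
    using nth_mem[of j "del i G"] by (auto simp: nth_append nth_del)
  then show ?thesis by (cases "G ! m") auto
next
  case False
  with assms show ?thesis by (auto simp: nth_append)
qed

lemma exponential_sequent_rule:
  assumes "valid_step r G Ps" and "\<forall>A\<in>set G. is_why A \<or> is_bang A"
    and "\<not> is_cut_or_abs r" and "arity r \<noteq> 0"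
  shows "(\<exists>i. r = RWeak i) \<or> is_cp r"
proof -
  have "\<forall>i<length G. is_why (G ! i) \<or> is_bang (G ! i)"
    using assms(2) by auto
  with assms(1,3,4) show ?thesis
    by (cases r) fastforce+
qed

lemma cp_conclusion_exponential:
  assumes "valid_step (RCp i) G Ps"
  shows "\<forall>A\<in>set G. is_why A \<or> is_bang A"
  using assms set_subset_insert_del[of i G] by auto

section \<open>Infinite branches\<close>

text \<open>Beyond a point n0 where f attains its minimum on {N..}, f can no longer decrease.\<close>
lemma finite_strict_descents:
  fixes f :: "nat \<Rightarrow> nat"
  assumes antimono: "\<And>n. N \<le> n \<Longrightarrow> f (Suc n) \<le> f n"
    and strict: "\<And>n. N \<le> n \<Longrightarrow> P n \<Longrightarrow> f (Suc n) < f n"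
  shows "finite {n. N \<le> n \<and> P n}"
proof -
  obtain n0 where "N \<le> n0" and least: "\<And>n. N \<le> n \<Longrightarrow> f n0 \<le> f n"
    using ex_has_least_nat[of "\<lambda>n. N \<le> n" N f] by auto
  have stable: "f n \<le> f n0" if "n0 \<le> n" for n
    using that by (induction rule: dec_induct) (use antimono \<open>N \<le> n0\<close> order_trans in force)+
  have "n < n0" if "N \<le> n" and "P n" for n
  proof (rule ccontr)
    assume "\<not> n < n0"
    then have "f n \<le> f n0"
      using stable by simp
    also have "\<dots> \<le> f (Suc n)"
      using least that(1) by simp
    finally show False
      using strict[OF that] by simp
  qed
  then have "{n. N \<le> n \<and> P n} \<subseteq> {..<n0}"
    by blast
  then show ?thesis
    using finite_subset by blast
qed

lemma finite_nat_set_eventually_notin: "finite {n :: nat. P n} \<Longrightarrow> \<exists>N. \<forall>n\<ge>N. \<not> P n"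
  by (metis (mono_tags) infinite_nat_iff_unbounded_le mem_Collect_eq)

definition premise_seqs :: "coder \<Rightarrow> nat list \<Rightarrow> fm list list" where
  "premise_seqs D w = map (\<lambda>k. seqt D (w @ [k])) [1..<Suc (arity (rl D w))]"

lemma coderivation_valid_step:
  "coderivation D \<Longrightarrow> w \<in> pos D \<Longrightarrow> valid_step (rl D w) (seqt D w) (premise_seqs D w)"
  by (simp add: coderivation_def premise_seqs_def)

lemma nth_premise_seqs:
  "1 \<le> k \<Longrightarrow> k \<le> arity (rl D w) \<Longrightarrow> premise_seqs D w ! (k - 1) = seqt D (w @ [k])"
  by (simp add: premise_seqs_def del: upt_Suc) (subst nth_upt; simp)

lemma length_premise_seqs [simp]: "length (premise_seqs D w) = arity (rl D w)"
  by (simp add: premise_seqs_def)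

lemma inf_branch_pos: "inf_branch D b \<Longrightarrow> b n \<in> pos D"
proof (induct n)
  case 0
  then show ?case by (simp add: inf_branch_def pos.root)
next
  case (Suc n)
  then show ?case by (metis inf_branch_def pos.child)
qed

lemma inf_branch_step:
  assumes "coderivation D" and "inf_branch D b"
  obtains k where "1 \<le> k" and "k \<le> arity (rl D (b n))" and "b (Suc n) = b n @ [k]"
    and "valid_step (rl D (b n)) (seqt D (b n)) (premise_seqs D (b n))"
    and "premise_seqs D (b n) ! (k - 1) = seqt D (b (Suc n))"
    and "seqt D (b (Suc n)) \<in> set (premise_seqs D (b n))"
proof -
  obtain k where k: "1 \<le> k" "k \<le> arity (rl D (b n))" and b_Suc: "b (Suc n) = b n @ [k]"
    using assms(2) unfolding inf_branch_def by blast
  have valid: "valid_step (rl D (b n)) (seqt D (b n)) (premise_seqs D (b n))"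
    using coderivation_valid_step[OF assms(1) inf_branch_pos[OF assms(2)]] .
  have nth: "premise_seqs D (b n) ! (k - 1) = seqt D (b (Suc n))"
    using nth_premise_seqs[OF k] b_Suc by simp
  have "k - 1 < length (premise_seqs D (b n))"
    using k by simp
  then have "seqt D (b (Suc n)) \<in> set (premise_seqs D (b n))"
    by (metis nth nth_mem)
  with that[OF k b_Suc valid nth] show ?thesis .
qed

abbreviation cp_left :: "coder \<Rightarrow> (nat \<Rightarrow> nat list) \<Rightarrow> nat \<Rightarrow> bool" where
  "cp_left D b n \<equiv> is_cp (rl D (b n)) \<and> b (Suc n) = b n @ [1]"

abbreviation cp_right :: "coder \<Rightarrow> (nat \<Rightarrow> nat list) \<Rightarrow> nat \<Rightarrow> bool" where
  "cp_right D b n \<equiv> is_cp (rl D (b n)) \<and> b (Suc n) = b n @ [2]"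

lemma inf_branch_cp_left_or_right:
  assumes "inf_branch D b" and "is_cp (rl D (b n))"
  shows "cp_left D b n \<or> cp_right D b n"
proof -
  obtain k where "1 \<le> k" "k \<le> arity (rl D (b n))" "b (Suc n) = b n @ [k]"
    using assms(1) unfolding inf_branch_def by blast
  moreover have "arity (rl D (b n)) = 2"
    using assms(2) by (cases "rl D (b n)") auto
  ultimately show ?thesis
    using assms(2) by (auto simp: le_Suc_eq numeral_2_eq_2)
qed

lemma inf_branch_eventually_no_cut_weakening_cp_left:
  assumes c: "coderivation D" and "finitely_expandable D" and b: "inf_branch D b"
  obtains N where "\<And>n. N \<le> n \<Longrightarrow> \<not> is_cut_or_abs (rl D (b n))"
    and "\<And>n i. N \<le> n \<Longrightarrow> rl D (b n) \<noteq> RWeak i"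
    and "\<And>n. N \<le> n \<Longrightarrow> \<not> cp_left D b n"
proof -
  have "finite {n. is_cut_or_abs (rl D (b n))}"
    using assms(2) b unfolding finitely_expandable_def by blast
  then obtain N0 where no_cut: "\<And>n. N0 \<le> n \<Longrightarrow> \<not> is_cut_or_abs (rl D (b n))"
    using finite_nat_set_eventually_notin by blast
  define f where "f n = seq_modalities (seqt D (b n))" for n
  define P where "P n \<longleftrightarrow> (\<exists>i. rl D (b n) = RWeak i) \<or> cp_left D b n" for n
  have descent: "f (Suc n) \<le> f n \<and> (P n \<longrightarrow> f (Suc n) < f n)" if "N0 \<le> n" for n
  proof -
    obtain k where b_Suc: "b (Suc n) = b n @ [k]"
      and valid: "valid_step (rl D (b n)) (seqt D (b n)) (premise_seqs D (b n))"
      and nth: "premise_seqs D (b n) ! (k - 1) = seqt D (b (Suc n))"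
      and premise: "seqt D (b (Suc n)) \<in> set (premise_seqs D (b n))"
      using inf_branch_step[OF c b] by blast
    have "f (Suc n) < f n" if "P n"
    proof (cases "cp_left D b n")
      case True
      then obtain i where rl: "rl D (b n) = RCp i"
        by (cases "rl D (b n)") auto
      from True b_Suc have "k = 1"
        by simp
      with nth have "premise_seqs D (b n) ! 0 = seqt D (b (Suc n))"
        by simp
      with cp_left_premise_seq_modalities_less[OF valid[unfolded rl]] show ?thesis
        by (simp add: f_def)
    next
      case False
      with \<open>P n\<close> obtain i where rl: "rl D (b n) = RWeak i"
        by (auto simp: P_def)
      with weakening_premise_seq_modalities_less[OF valid[unfolded rl] premise] show ?thesis
        by (simp add: f_def)
    qed
    moreover have "f (Suc n) \<le> f n"
      using premise_seq_modalities_le[OF valid no_cut[OF \<open>N0 \<le> n\<close>] premise] by (simp add: f_def)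
    ultimately show ?thesis
      by blast
  qed
  have "finite {n. N0 \<le> n \<and> P n}"
    using descent by (intro finite_strict_descents[of N0 f]) auto
  then obtain N1 where "\<And>n. N1 \<le> n \<Longrightarrow> \<not> (N0 \<le> n \<and> P n)"
    using finite_nat_set_eventually_notin by blast
  with no_cut that[of "max N0 N1"] show ?thesis
    by (auto simp: P_def)
qed

text \<open>The right premise of cp repeats the conclusion, which consists of ?- and !-formulas.\<close>
lemma inf_branch_after_cp_right:
  assumes c: "coderivation D" and b: "inf_branch D b" and "cp_right D b n"
  shows "seqt D (b (Suc n)) = seqt D (b n)"
    and "is_cut_or_abs (rl D (b (Suc n))) \<or> (\<exists>i. rl D (b (Suc n)) = RWeak i) \<or>
      is_cp (rl D (b (Suc n)))"
proof -
  obtain k where "b (Suc n) = b n @ [k]"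
    and valid: "valid_step (rl D (b n)) (seqt D (b n)) (premise_seqs D (b n))"
    and nth: "premise_seqs D (b n) ! (k - 1) = seqt D (b (Suc n))"
    using inf_branch_step[OF c b] by blast
  with \<open>cp_right D b n\<close> have "k = 2"
    by simp
  obtain i where rl: "rl D (b n) = RCp i"
    using \<open>cp_right D b n\<close> by (cases "rl D (b n)") auto
  with valid nth \<open>k = 2\<close> have same: "seqt D (b (Suc n)) = seqt D (b n)"
    by auto
  then show "seqt D (b (Suc n)) = seqt D (b n)" .
  have exponential: "\<forall>A\<in>set (seqt D (b (Suc n))). is_why A \<or> is_bang A"
    using cp_conclusion_exponential[OF valid[unfolded rl]] same by simp
  obtain k' where "1 \<le> k'" and "k' \<le> arity (rl D (b (Suc n)))"
    and valid': "valid_step (rl D (b (Suc n))) (seqt D (b (Suc n))) (premise_seqs D (b (Suc n)))"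
    using inf_branch_step[OF c b] by blast
  then have "arity (rl D (b (Suc n))) \<noteq> 0"
    by linarith
  with exponential_sequent_rule[OF valid' exponential]
  show "is_cut_or_abs (rl D (b (Suc n))) \<or> (\<exists>i. rl D (b (Suc n)) = RWeak i) \<or>
      is_cp (rl D (b (Suc n)))"
    by blast
qed

lemma weakly_progressing_eventually_cp_right:
  assumes c: "coderivation D" and fe: "finitely_expandable D" and "weakly_progressing D"
    and b: "inf_branch D b"
  shows "\<exists>n1. \<forall>n\<ge>n1. cp_right D b n \<and> seqt D (b n) = seqt D (b n1)"
proof -
  obtain N where no_cut: "\<And>n. N \<le> n \<Longrightarrow> \<not> is_cut_or_abs (rl D (b n))"
    and no_weak: "\<And>n i. N \<le> n \<Longrightarrow> rl D (b n) \<noteq> RWeak i"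
    and no_left: "\<And>n. N \<le> n \<Longrightarrow> \<not> cp_left D b n"
    using inf_branch_eventually_no_cut_weakening_cp_left[OF c fe b] by blast
  have "infinite {n. cp_right D b n}"
    using assms(3) b unfolding weakly_progressing_def by blast
  then obtain n1 where "N \<le> n1" and "cp_right D b n1"
    unfolding infinite_nat_iff_unbounded_le by blast
  have "cp_right D b n \<and> seqt D (b n) = seqt D (b n1)" if "n1 \<le> n" for n
    using that
  proof (induction rule: dec_induct)
    case base
    show ?case using \<open>cp_right D b n1\<close> by simp
  next
    case (step n)
    then have after: "seqt D (b (Suc n)) = seqt D (b n)"
      "is_cut_or_abs (rl D (b (Suc n))) \<or> (\<exists>i. rl D (b (Suc n)) = RWeak i) \<or>
        is_cp (rl D (b (Suc n)))"
      using inf_branch_after_cp_right[OF c b] by blast+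
    have "N \<le> Suc n"
      using step.hyps \<open>N \<le> n1\<close> by simp
    with after(2) no_cut no_weak have "is_cp (rl D (b (Suc n)))"
      by blast
    with \<open>N \<le> Suc n\<close> no_left inf_branch_cp_left_or_right[OF b] have "cp_right D b (Suc n)"
      by blast
    with after(1) step.IH show ?case
      by simp
  qed
  then show ?thesis
    by blast
qed

lemma cp_right_tail_nwf_box:
  assumes "\<And>n. n1 \<le> n \<Longrightarrow> cp_right D b n"
  shows "nwf_box_at D (b n1) \<and> (\<forall>m. b (n1 + m) = b n1 @ replicate m 2)"
proof -
  have main_branch: "b (n1 + m) = b n1 @ replicate m 2" for m
  proof (induction m)
    case (Suc m)
    then show ?case
      using assms[of "n1 + m"] by (simp add: replicate_append_same)
  qed simp
  moreover have "is_cp (rl D (b n1 @ replicate m 2))" for m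
    using assms[of "n1 + m"] main_branch[of m] by simp
  ultimately show ?thesis
    unfolding nwf_box_at_def by blast
qed

lemma weakly_progressing_inf_branch_nwf_box:
  assumes "coderivation D" and "finitely_expandable D" and "weakly_progressing D"
    and "inf_branch D b"
  shows "\<exists>n. nwf_box_at D (b n) \<and> (\<forall>m. b (n + m) = b n @ replicate m 2)"
proof -
  obtain n1 where "\<forall>n\<ge>n1. cp_right D b n"
    using weakly_progressing_eventually_cp_right[OF assms] by blast
  then have "nwf_box_at D (b n1) \<and> (\<forall>m. b (n1 + m) = b n1 @ replicate m 2)"
    by (intro cp_right_tail_nwf_box) simp
  then show ?thesis
    by blast
qed

section \<open>Threads of !-formulas\<close>

definition bang_path :: "coder \<Rightarrow> (nat \<Rightarrow> nat list) \<Rightarrow> nat \<Rightarrow> (nat \<Rightarrow> nat) \<Rightarrow> bool" where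
  "bang_path D b n0 j \<longleftrightarrow>
     (\<forall>n\<ge>n0. j n < length (seqt D (b n)) \<and> is_bang (seqt D (b n) ! j n) \<and>
        parent (rl D (b n)) (length (seqt D (b n))) (last (b (Suc n))) (j (Suc n)) = Some (j n))"

lemma bang_thread_bang_path: "bang_thread D b n0 j \<Longrightarrow> bang_path D b n0 j"
  by (simp add: bang_thread_def bang_path_def)

lemma bang_path_extend_down:
  assumes "bang_path D b (Suc n) j"
    and "parent (rl D (b n)) (length (seqt D (b n))) (last (b (Suc n))) (j (Suc n)) = Some m"
    and "m < length (seqt D (b n))" and "is_bang (seqt D (b n) ! m)"
  shows "bang_path D b n (j(n := m))"
proof -
  have split: "n \<le> k \<longleftrightarrow> k = n \<or> Suc n \<le> k" for k
    by linarith
  show ?thesis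
    using assms unfolding bang_path_def split by auto
qed

lemma bang_path_extends_to_bang_thread:
  assumes "bang_path D b n1 j"
  obtains n0 j' where "n0 \<le> n1" and "bang_thread D b n0 j'"
proof -
  define n0 where "n0 = (LEAST n. \<exists>j. bang_path D b n j)"
  have "n0 \<le> n1"
    unfolding n0_def by (rule Least_le) (use assms in blast)
  have "\<exists>j. bang_path D b n0 j"
    unfolding n0_def by (rule LeastI_ex) (use assms in blast)
  then obtain j0 where path: "bang_path D b n0 j0"
    by blast
  have "n0 = 0 \<or>
     (\<forall>m. parent (rl D (b (n0 - 1))) (length (seqt D (b (n0 - 1)))) (last (b n0)) (j0 n0) = Some m
        \<longrightarrow> \<not> (m < length (seqt D (b (n0 - 1))) \<and> is_bang (seqt D (b (n0 - 1)) ! m)))"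
  proof (cases n0)
    case (Suc p)
    have "\<not> (m < length (seqt D (b p)) \<and> is_bang (seqt D (b p) ! m))"
      if "parent (rl D (b p)) (length (seqt D (b p))) (last (b (Suc p))) (j0 (Suc p)) = Some m"
      for m
    proof
      assume "m < length (seqt D (b p)) \<and> is_bang (seqt D (b p) ! m)"
      with that path Suc have "bang_path D b p (j0(p := m))"
        by (intro bang_path_extend_down) auto
      then have "\<exists>j. bang_path D b p j"
        by blast
      then have "n0 \<le> p"
        unfolding n0_def by (rule Least_le)
      with Suc show False
        by simp
    qed
    with Suc show ?thesis
      by simp
  qed simp
  with path have "bang_thread D b n0 j0"
    by (simp add: bang_thread_def bang_path_def)
  with \<open>n0 \<le> n1\<close> that show ?thesis
    by blast
qed

lemma bang_path_descent:
  assumes c: "coderivation D" and b: "inf_branch D b" and path: "bang_path D b n0 j"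
    and "n0 \<le> n"
  shows "size (seqt D (b (Suc n)) ! j (Suc n)) \<le> size (seqt D (b n) ! j n)"
    and "cp_left D b n \<Longrightarrow> size (seqt D (b (Suc n)) ! j (Suc n)) < size (seqt D (b n) ! j n)"
proof -
  obtain k where k: "1 \<le> k" "k \<le> arity (rl D (b n))" and b_Suc: "b (Suc n) = b n @ [k]"
    and valid: "valid_step (rl D (b n)) (seqt D (b n)) (premise_seqs D (b n))"
    and nth: "premise_seqs D (b n) ! (k - 1) = seqt D (b (Suc n))"
    using inf_branch_step[OF c b] by blast
  from path \<open>n0 \<le> n\<close> have "is_bang (seqt D (b n) ! j n)"
    and parent: "parent (rl D (b n)) (length (seqt D (b n))) k (j (Suc n)) = Some (j n)"
    and j: "j (Suc n) < length (premise_seqs D (b n) ! (k - 1))"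
    using b_Suc nth unfolding bang_path_def by (auto dest: spec[of _ "Suc n"])
  show "size (seqt D (b (Suc n)) ! j (Suc n)) \<le> size (seqt D (b n) ! j n)"
    using parent_size_le[OF valid k j parent \<open>is_bang _\<close>] nth by simp
  assume "cp_left D b n"
  then obtain i where rl: "rl D (b n) = RCp i" and "k = 1"
    using b_Suc by (cases "rl D (b n)") auto
  with cp_left_parent_size_less[OF valid[unfolded rl]] parent j nth
  show "size (seqt D (b (Suc n)) ! j (Suc n)) < size (seqt D (b n) ! j n)"
    by simp
qed

lemma progressing_imp_weakly_progressing:
  assumes c: "coderivation D" and "progressing D"
  shows "weakly_progressing D"
  unfolding weakly_progressing_def
proof (intro allI impI)
  fix b
  assume b: "inf_branch D b"
  then obtain n0 j where thread: "bang_thread D b n0 j"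
    and cps: "infinite {n. n0 \<le> n \<and> is_cp (rl D (b n))}"
    using assms(2) unfolding progressing_def by blast
  from thread have path: "bang_path D b n0 j"
    by (rule bang_thread_bang_path)
  have "finite {n. n0 \<le> n \<and> cp_left D b n}"
    using bang_path_descent[OF c b path]
    by (intro finite_strict_descents[of n0 "\<lambda>n. size (seqt D (b n) ! j n)"]) auto
  moreover have "{n. n0 \<le> n \<and> is_cp (rl D (b n))} \<subseteq>
      {n. n0 \<le> n \<and> cp_left D b n} \<union> {n. cp_right D b n}"
    using inf_branch_cp_left_or_right[OF b] by blast
  ultimately show "infinite {n. cp_right D b n}"
    using cps by (meson finite_UnI finite_subset)
qed

lemma weakly_progressing_imp_progressing:
  assumes c: "coderivation D" and "finitely_expandable D" and "weakly_progressing D"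
  shows "progressing D"
  unfolding progressing_def
proof (intro allI impI)
  fix b
  assume b: "inf_branch D b"
  obtain n1 where tail: "\<forall>n\<ge>n1. cp_right D b n \<and> seqt D (b n) = seqt D (b n1)"
    using weakly_progressing_eventually_cp_right[OF assms b] by blast
  then have cp_tail: "\<forall>n\<ge>n1. is_cp (rl D (b n))"
    by blast
  then obtain i where "rl D (b n1) = RCp i"
    by (cases "rl D (b n1)") auto
  with coderivation_valid_step[OF c inf_branch_pos[OF b, of n1]]
  have "valid_step (RCp i) (seqt D (b n1)) (premise_seqs D (b n1))"
    by simp
  then have i: "i < length (seqt D (b n1))" and bang: "is_bang (seqt D (b n1) ! i)"
    by auto
  have "bang_path D b n1 (\<lambda>_. i)"
    unfolding bang_path_def
  proof (intro allI impI)
    fix n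
    assume "n1 \<le> n"
    with tail have right: "cp_right D b n" and same: "seqt D (b n) = seqt D (b n1)"
      by blast+
    from right obtain i' where "rl D (b n) = RCp i'"
      by (cases "rl D (b n)") auto
    with right same i bang show "i < length (seqt D (b n)) \<and> is_bang (seqt D (b n) ! i) \<and>
        parent (rl D (b n)) (length (seqt D (b n))) (last (b (Suc n))) i = Some i"
      by simp
  qed
  then obtain n0 j where "n0 \<le> n1" and thread: "bang_thread D b n0 j"
    by (rule bang_path_extends_to_bang_thread)
  with cp_tail have "{n1..} \<subseteq> {n. n0 \<le> n \<and> is_cp (rl D (b n))}"
    by auto
  then have "infinite {n. n0 \<le> n \<and> is_cp (rl D (b n))}"
    using infinite_Ici finite_subset by blast
  with thread show "\<exists>n0 j. bang_thread D b n0 j \<and> infinite {n. n0 \<le> n \<and> is_cp (rl D (b n))}"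
    by blast
qed

theorem mainTheorem7:
  assumes "coderivation D"
    and "finitely_expandable D"
  shows "(weakly_progressing D \<longrightarrow>
            (\<forall>b. inf_branch D b \<longrightarrow>
               (\<exists>n. nwf_box_at D (b n) \<and> (\<forall>m. b (n + m) = b n @ replicate m 2))))
         \<and> (progressing D \<longleftrightarrow> weakly_progressing D)"
proof (intro conjI iffI impI allI)
  show "\<exists>n. nwf_box_at D (b n) \<and> (\<forall>m. b (n + m) = b n @ replicate m 2)"
    if "weakly_progressing D" and "inf_branch D b" for b
    using weakly_progressing_inf_branch_nwf_box[OF assms that] .
  show "weakly_progressing D" if "progressing D"
    using progressing_imp_weakly_progressing[OF assms(1) that] .
  show "progressing D" if "weakly_progressing D"
    using weakly_progressing_imp_progressing[OF assms that] .
qed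

end
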